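(* Let $0<\sigma\le\theta$ and $n\geq1$. The function $f(\beta,\gamma)=\alpha_\beta\bigl(\varphi^n_{\sqrt{\gamma},\sigma},\varphi^n_{0,\theta}\bigr)$, defined for $\beta\in[0,1]$, $\gamma\ge 0$, is non-increasing in $\gamma$ for every fixed $\beta\in[0,1]$, and convex and non-increasing in $\beta$ for every fixed $\gamma>0$.
   Context: $\varphi_{\mu,\sigma}(y)=\frac{1}{\sqrt{2\pi}\sigma}e^{-(y-\mu)^2/(2\sigma^2)}$; $\varphi^n_{\mu,\sigma}$ is the distribution on $\mathbb{R}^n$ of $n$ i.i.d. $\mathcal{N}(\mu,\sigma^2)$ coordinates (so $\varphi^n_{\sqrt\gamma,\sigma}$ has mean vector $(\sqrt\gamma,\dots,\sqrt\gamma)$). For distributions $A,B$ on $\mathcal{Z}$, $\alpha_\beta(A,B)=\inf\{1-\mathbb{E}_A[T]:\ T:\mathcal{Z}\to[0,1],\ \mathbb{E}_B[T]\le\beta\}$. *)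

theory Defs
  imports "HOL-Probability.Probability"
begin

(* n-fold product of N(mu, s^2) on R^n, with R^n represented as functions {..<n} -> real *)
definition gauss_prod :: "nat \<Rightarrow> real \<Rightarrow> real \<Rightarrow> (nat \<Rightarrow> real) measure" where
  "gauss_prod n mu s = PiM {..<n} (\<lambda>_. density lborel (normal_density mu s))"

definition alpha_beta :: "real \<Rightarrow> 'a measure \<Rightarrow> 'a measure \<Rightarrow> real" where
  "alpha_beta \<beta> A B = Inf {1 - (\<integral>x. T x \<partial>A) | T.
      T \<in> borel_measurable B \<and> (\<forall>x\<in>space B. 0 \<le> T x \<and> T x \<le> 1) \<and> (\<integral>x. T x \<partial>B) \<le> \<beta>}"

end

theory Submission
  imports Defs
begin

text \<open>Monotonicity and convexity in \<beta> hold for any two probability measures: the tests of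
  level \<beta> grow with \<beta>, and mixing tests mixes both their levels and their type II errors.

  For monotonicity in \<gamma>, the likelihood ratio of N(\<mu>,\<sigma>^2)^n against
  N(0,\<theta>^2)^n (\<mu> = \<surd>\<gamma>) is an antitone function of a statistic
  F x = \<Sum>i. \<psi>(x i), with \<psi> y = -y if \<sigma> = \<theta> and \<psi> y = (y - b)^2 for some b \<ge> 0
  if \<sigma> < \<theta>. By Neyman--Pearson every test of level \<beta> is beaten by an antitone function
  g of F of no greater level. Translating the test g \<circ> F by the increase \<delta> of the mean keeps
  its power against the new alternative, and does not increase its level under the null: for the
  linear statistic pointwise, for the quadratic one by Anderson's inequality, which reduces
  coordinatewise to the reflection y \<mapsto> 2b + \<delta> - y of a centred Gaussian.\<close>

section \<open>Tests and the optimal type II error\<close>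

definition level_tests :: "real \<Rightarrow> 'a measure \<Rightarrow> ('a \<Rightarrow> real) set" where
  "level_tests \<beta> B = {T. T \<in> borel_measurable B \<and> (\<forall>x\<in>space B. 0 \<le> T x \<and> T x \<le> 1) \<and> (\<integral>x. T x \<partial>B) \<le> \<beta>}"

lemma alpha_beta_eq_Inf_level_tests:
  "alpha_beta \<beta> A B = Inf ((\<lambda>T. 1 - (\<integral>x. T x \<partial>A)) ` level_tests \<beta> B)"
  unfolding alpha_beta_def level_tests_def by (rule arg_cong[where f=Inf]) auto

lemma zero_in_level_tests: "0 \<le> \<beta> \<Longrightarrow> (\<lambda>_. 0) \<in> level_tests \<beta> B"
  by (simp add: level_tests_def)

lemma unit_valued_integral:
  fixes h :: "'a \<Rightarrow> real"
  assumes "prob_space M" and "h \<in> borel_measurable M" and "\<And>x. x \<in> space M \<Longrightarrow> 0 \<le> h x \<and> h x \<le> 1"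
  shows "integrable M h" "0 \<le> (\<integral>x. h x \<partial>M)" "(\<integral>x. h x \<partial>M) \<le> 1"
proof -
  interpret P: prob_space M by fact
  show int: "integrable M h"
    using assms(2,3) by (intro P.integrable_const_bound[where B=1]) auto
  show "0 \<le> (\<integral>x. h x \<partial>M)"
    using assms(3) by (intro integral_nonneg_AE) auto
  have "(\<integral>x. h x \<partial>M) \<le> (\<integral>x. 1 \<partial>M)"
    using assms(3) int by (intro integral_mono_AE) auto
  then show "(\<integral>x. h x \<partial>M) \<le> 1"
    by (simp add: P.prob_space)
qed

locale test_pair = A: prob_space A + B: prob_space B for A B :: "'a measure" +
  assumes sets_eq: "sets A = sets B"
begin

lemma level_test_integrable:
  assumes "T \<in> level_tests \<beta> B"
  shows "integrable A T" "integrable B T"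
    and "0 \<le> (\<integral>x. T x \<partial>A)" "(\<integral>x. T x \<partial>A) \<le> 1"
proof -
  have measB: "T \<in> borel_measurable B" and boundsB: "\<And>x. x \<in> space B \<Longrightarrow> 0 \<le> T x \<and> T x \<le> 1"
    using assms by (auto simp: level_tests_def)
  have measA: "T \<in> borel_measurable A"
    using measB by (simp add: measurable_cong_sets[OF sets_eq refl])
  have boundsA: "\<And>x. x \<in> space A \<Longrightarrow> 0 \<le> T x \<and> T x \<le> 1"
    using boundsB sets_eq_imp_space_eq[OF sets_eq] by simp
  show "integrable A T" "0 \<le> (\<integral>x. T x \<partial>A)" "(\<integral>x. T x \<partial>A) \<le> 1"
    using unit_valued_integral[OF A.prob_space_axioms measA boundsA] by auto
  show "integrable B T"
    using unit_valued_integral[OF B.prob_space_axioms measB boundsB] by auto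
qed

lemma bdd_below_type_II_errors: "bdd_below ((\<lambda>T. 1 - (\<integral>x. T x \<partial>A)) ` level_tests \<beta> B)"
  by (rule bdd_belowI[where m=0]) (use level_test_integrable in force)

lemma alpha_beta_le:
  "T \<in> level_tests \<beta> B \<Longrightarrow> alpha_beta \<beta> A B \<le> 1 - (\<integral>x. T x \<partial>A)"
  unfolding alpha_beta_eq_Inf_level_tests by (rule cInf_lower[OF _ bdd_below_type_II_errors]) auto

lemma le_alpha_beta:
  "0 \<le> \<beta> \<Longrightarrow> (\<And>T. T \<in> level_tests \<beta> B \<Longrightarrow> c \<le> 1 - (\<integral>x. T x \<partial>A)) \<Longrightarrow> c \<le> alpha_beta \<beta> A B"
  unfolding alpha_beta_eq_Inf_level_tests using zero_in_level_tests by (intro cInf_greatest) auto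

lemma alpha_beta_approx:
  assumes "0 \<le> \<beta>" and "0 < e"
  obtains T where "T \<in> level_tests \<beta> B" "1 - (\<integral>x. T x \<partial>A) < alpha_beta \<beta> A B + e"
proof -
  have "Inf ((\<lambda>T. 1 - (\<integral>x. T x \<partial>A)) ` level_tests \<beta> B) < alpha_beta \<beta> A B + e"
    using assms unfolding alpha_beta_eq_Inf_level_tests by simp
  then show ?thesis
    using that zero_in_level_tests[OF assms(1)]
    by (subst (asm) cInf_less_iff[OF _ bdd_below_type_II_errors]) auto
qed

lemma antimono_on_alpha_beta: "antimono_on {0..} (\<lambda>\<beta>. alpha_beta \<beta> A B)"
  by (rule monotone_onI) (auto intro!: le_alpha_beta alpha_beta_le simp: level_tests_def)

lemma mixture_in_level_tests:
  assumes T1: "T1 \<in> level_tests \<beta>1 B" and T2: "T2 \<in> level_tests \<beta>2 B"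
    and uv: "0 \<le> u" "0 \<le> v" "u + v = 1"
  shows "(\<lambda>x. u * T1 x + v * T2 x) \<in> level_tests (u * \<beta>1 + v * \<beta>2) B"
proof -
  have "0 \<le> u * T1 x + v * T2 x \<and> u * T1 x + v * T2 x \<le> 1" if "x \<in> space B" for x
  proof -
    have "0 \<le> T1 x" "T1 x \<le> 1" "0 \<le> T2 x" "T2 x \<le> 1"
      using T1 T2 that by (auto simp: level_tests_def)
    then have "u * T1 x + v * T2 x \<le> u * 1 + v * 1"
      using uv by (intro add_mono mult_left_mono) auto
    then show ?thesis
      using \<open>0 \<le> T1 x\<close> \<open>0 \<le> T2 x\<close> uv by simp
  qed
  moreover have "(\<integral>x. u * T1 x + v * T2 x \<partial>B) = u * (\<integral>x. T1 x \<partial>B) + v * (\<integral>x. T2 x \<partial>B)"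
    using level_test_integrable(2)[OF T1] level_test_integrable(2)[OF T2] by simp
  moreover have "(\<integral>x. T1 x \<partial>B) \<le> \<beta>1" "(\<integral>x. T2 x \<partial>B) \<le> \<beta>2"
    using T1 T2 by (auto simp: level_tests_def)
  ultimately show ?thesis
    using T1 T2 uv unfolding level_tests_def by (auto intro!: add_mono mult_left_mono)
qed

lemma convex_on_alpha_beta: "convex_on {0..} (\<lambda>\<beta>. alpha_beta \<beta> A B)"
  unfolding convex_on_def
proof (intro conjI convex_real_interval ballI allI impI)
  fix \<beta>1 \<beta>2 u v :: real
  assume \<beta>: "\<beta>1 \<in> {0..}" "\<beta>2 \<in> {0..}" and uv: "0 \<le> u" "0 \<le> v" "u + v = 1"
  show "alpha_beta (u *\<^sub>R \<beta>1 + v *\<^sub>R \<beta>2) A B \<le> u * alpha_beta \<beta>1 A B + v * alpha_beta \<beta>2 A B"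
  proof (rule field_le_epsilon)
    fix e :: real assume "0 < e"
    obtain T1 where T1: "T1 \<in> level_tests \<beta>1 B" "1 - (\<integral>x. T1 x \<partial>A) < alpha_beta \<beta>1 A B + e"
      using alpha_beta_approx[of \<beta>1 e] \<beta> \<open>0 < e\<close> by auto
    obtain T2 where T2: "T2 \<in> level_tests \<beta>2 B" "1 - (\<integral>x. T2 x \<partial>A) < alpha_beta \<beta>2 A B + e"
      using alpha_beta_approx[of \<beta>2 e] \<beta> \<open>0 < e\<close> by auto
    have "alpha_beta (u * \<beta>1 + v * \<beta>2) A B \<le> 1 - (\<integral>x. u * T1 x + v * T2 x \<partial>A)"
      by (rule alpha_beta_le[OF mixture_in_level_tests[OF T1(1) T2(1) uv]])
    also have "\<dots> = u * (1 - (\<integral>x. T1 x \<partial>A)) + v * (1 - (\<integral>x. T2 x \<partial>A))"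
      using level_test_integrable(1)[OF T1(1)] level_test_integrable(1)[OF T2(1)] uv
      by (simp add: algebra_simps)
    also have "\<dots> \<le> u * (alpha_beta \<beta>1 A B + e) + v * (alpha_beta \<beta>2 A B + e)"
      using T1(2) T2(2) uv by (intro add_mono mult_left_mono) auto
    also have "\<dots> = u * alpha_beta \<beta>1 A B + v * alpha_beta \<beta>2 A B + e"
      using uv by (simp add: algebra_simps flip: distrib_left)
    finally show "alpha_beta (u *\<^sub>R \<beta>1 + v *\<^sub>R \<beta>2) A B \<le> u * alpha_beta \<beta>1 A B + v * alpha_beta \<beta>2 A B + e"
      by simp
  qed
qed

end

section \<open>The Neyman--Pearson lemma\<close>

lemma borel_measurable_antimono:
  fixes g :: "real \<Rightarrow> real"
  assumes "antimono g"
  shows "g \<in> borel_measurable borel"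
proof -
  have "mono (\<lambda>x. - g x)"
    using assms by (auto simp: mono_def antimono_def)
  then have "(\<lambda>x. - g x) \<in> borel_measurable borel"
    by (rule borel_measurable_mono)
  then have "(\<lambda>x. - (- g x)) \<in> borel_measurable borel"
    by measurable
  then show ?thesis
    by simp
qed

lemma (in real_distribution) quantile_exists:
  assumes "0 < b" and "b < 1"
  obtains t where "measure M {..<t} \<le> b" and "b \<le> cdf M t"
proof -
  define S where "S = {t. b \<le> cdf M t}"
  have "eventually (\<lambda>t. b < cdf M t) at_top"
    using cdf_lim_at_top_prob assms(2) by (rule order_tendstoD)
  then obtain t1 where "t1 \<in> S"
    by (auto simp: S_def eventually_at_top_linorder intro: less_imp_le)
  have "eventually (\<lambda>t. cdf M t < b) at_bot"
    using cdf_lim_at_bot assms(1) by (rule order_tendstoD)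
  then obtain N where N: "\<And>t. t \<le> N \<Longrightarrow> cdf M t < b"
    by (auto simp: eventually_at_bot_linorder)
  have bdd: "bdd_below S"
  proof (rule bdd_belowI[where m=N])
    show "N \<le> s" if "s \<in> S" for s
      using that N[of s] by (cases "s \<le> N") (auto simp: S_def)
  qed
  define t0 where "t0 = Inf S"
  have "eventually (\<lambda>t. b \<le> cdf M t) (at_right t0)"
  proof (rule eventually_at_rightI[where b="t0 + 1"])
    fix t assume "t \<in> {t0<..<t0 + 1}"
    then obtain s where "s \<in> S" "s < t"
      using cInf_less_iff[OF _ bdd, of t] \<open>t1 \<in> S\<close> by (auto simp: t0_def)
    then show "b \<le> cdf M t"
      using cdf_nondecreasing[of s t] by (simp add: S_def)
  qed simp
  moreover have "(cdf M \<longlongrightarrow> cdf M t0) (at_right t0)"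
    using cdf_is_right_cont by (simp add: continuous_within)
  ultimately have "b \<le> cdf M t0"
    by (intro tendsto_lowerbound) auto
  moreover have "eventually (\<lambda>t. cdf M t \<le> b) (at_left t0)"
  proof (rule eventually_at_leftI[where a="t0 - 1"])
    fix t assume "t \<in> {t0 - 1<..<t0}"
    then have "t \<notin> S"
      using cInf_lower[OF _ bdd, of t] by (auto simp: t0_def)
    then show "cdf M t \<le> b"
      by (simp add: S_def)
  qed simp
  then have "measure M {..<t0} \<le> b"
    using cdf_at_left by (intro tendsto_upperbound) auto
  ultimately show ?thesis
    using that by blast
qed

definition threshold_test :: "real \<Rightarrow> real \<Rightarrow> real \<Rightarrow> real" where
  "threshold_test t l u = (if u < t then 1 else if u = t then l else 0)"

lemma threshold_test_bounds: "0 \<le> l \<Longrightarrow> l \<le> 1 \<Longrightarrow> 0 \<le> threshold_test t l u \<and> threshold_test t l u \<le> 1"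
  by (simp add: threshold_test_def)

lemma antimono_threshold_test: "0 \<le> l \<Longrightarrow> l \<le> 1 \<Longrightarrow> antimono (threshold_test t l)"
  by (auto simp: threshold_test_def antimono_def)

lemma borel_measurable_threshold_test[measurable]: "threshold_test t l \<in> borel_measurable borel"
  unfolding threshold_test_def by measurable

lemma threshold_test_level_exists:
  fixes F :: "'a \<Rightarrow> real"
  assumes "prob_space Q" and [measurable]: "F \<in> borel_measurable Q" and "0 < b" "b < 1"
  obtains t l where "0 \<le> l" "l \<le> 1" "(\<integral>x. threshold_test t l (F x) \<partial>Q) = b"
proof -
  define M where "M = distr Q borel F"
  interpret real_distribution M
    using prob_space.prob_space_distr[OF assms(1), of F borel]
    by (simp add: M_def real_distribution_def real_distribution_axioms_def)
  obtain t where below: "measure M {..<t} \<le> b" and above: "b \<le> cdf M t"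
    using quantile_exists assms(3,4) by blast
  have atom: "cdf M t = measure M {..<t} + measure M {t}"
    unfolding cdf_def by (subst finite_measure_Union[symmetric]) (auto intro!: arg_cong[where f="measure M"])
  define l where "l = (if measure M {t} = 0 then 0 else (b - measure M {..<t}) / measure M {t})"
  have l: "0 \<le> l" "l \<le> 1" "measure M {..<t} + l * measure M {t} = b"
    using below above atom by (auto simp: l_def field_simps)
  have "(\<integral>x. threshold_test t l (F x) \<partial>Q) = (\<integral>u. threshold_test t l u \<partial>M)"
    unfolding M_def by (subst integral_distr) auto
  also have "\<dots> = (\<integral>u. indicator {..<t} u + l * indicator {t} u \<partial>M)"
    by (intro Bochner_Integration.integral_cong) (auto simp: threshold_test_def indicator_def)
  also have "\<dots> = measure M {..<t} + l * measure M {t}"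
    by (subst Bochner_Integration.integral_add)
      (auto intro!: integrable_real_indicator simp: less_top[symmetric])
  finally show ?thesis
    using that l by simp
qed

text \<open>With k = h t the density at the threshold, (G - T) (L - k) \<ge> 0 pointwise; integrating
  against Q, the terms with k cancel because G and T have the same level.\<close>

lemma neyman_pearson:
  fixes Q :: "'a measure" and F T :: "'a \<Rightarrow> real" and h :: "real \<Rightarrow> real"
  defines "P \<equiv> density Q (\<lambda>x. h (F x))"
  assumes Q: "prob_space Q" and P: "prob_space P"
    and [measurable]: "F \<in> borel_measurable Q" and h: "antimono h" "\<And>u. 0 \<le> h u"
    and [measurable]: "T \<in> borel_measurable Q" and T: "\<And>x. x \<in> space Q \<Longrightarrow> 0 \<le> T x \<and> T x \<le> 1"
    and l: "0 \<le> l" "l \<le> 1"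
    and level: "(\<integral>x. threshold_test t l (F x) \<partial>Q) = (\<integral>x. T x \<partial>Q)"
  shows "(\<integral>x. T x \<partial>P) \<le> (\<integral>x. threshold_test t l (F x) \<partial>P)"
proof -
  note [measurable] = borel_measurable_antimono[OF h(1)]
  define L where "L x = h (F x)" for x
  define G where "G x = threshold_test t l (F x)" for x
  have G: "0 \<le> G x \<and> G x \<le> 1" for x
    unfolding G_def using threshold_test_bounds[OF l] by simp
  have [measurable]: "G \<in> borel_measurable Q"
    unfolding G_def by measurable
  have integrable_Q: "integrable Q T" "integrable Q G"
    by (intro unit_valued_integral(1)[OF Q]; use T G in simp)+
  have integrable_P: "integrable P T" "integrable P G"
    by (intro unit_valued_integral(1)[OF P]; use T G in \<open>simp add: P_def\<close>)+
  have density_eq: "(\<integral>x. S x \<partial>P) = (\<integral>x. L x * S x \<partial>Q)"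
    if [measurable]: "S \<in> borel_measurable Q" for S
    unfolding P_def L_def by (subst integral_density) (auto simp: h(2))
  have integrable_LQ: "integrable Q (\<lambda>x. L x * T x)" "integrable Q (\<lambda>x. L x * G x)"
    using integrable_P unfolding P_def L_def by (auto simp: integrable_density h(2))
  have "0 \<le> (G x - T x) * (L x - h t)" if "x \<in> space Q" for x
  proof (cases "F x < t")
    case True
    then have "G x = 1" "h t \<le> L x"
      using h(1) by (auto simp: G_def L_def threshold_test_def antimono_def)
    then show ?thesis
      using T[OF that] by simp
  next
    case False
    then have "G x - T x \<le> 0 \<and> L x \<le> h t \<or> L x = h t"
      using h(1) T[OF that] by (auto simp: G_def L_def threshold_test_def antimono_def)
    then show ?thesis
      by (auto intro: mult_nonpos_nonpos)
  qed
  then have "0 \<le> (\<integral>x. (G x - T x) * (L x - h t) \<partial>Q)"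
    by (intro integral_nonneg_AE AE_I2) auto
  also have "\<dots> = ((\<integral>x. L x * G x \<partial>Q) - (\<integral>x. L x * T x \<partial>Q)) - h t * ((\<integral>x. G x \<partial>Q) - (\<integral>x. T x \<partial>Q))"
    using integrable_Q integrable_LQ by (simp add: algebra_simps)
  also have "\<dots> = (\<integral>x. G x \<partial>P) - (\<integral>x. T x \<partial>P)"
    using level by (simp add: density_eq G_def[symmetric])
  finally show ?thesis
    by (simp add: G_def)
qed

lemma antimono_test_as_powerful:
  fixes Q :: "'a measure" and F T :: "'a \<Rightarrow> real" and h :: "real \<Rightarrow> real"
  defines "P \<equiv> density Q (\<lambda>x. h (F x))"
  assumes Q: "prob_space Q" and P: "prob_space P"
    and F [measurable]: "F \<in> borel_measurable Q" and h: "antimono h" "\<And>u. 0 \<le> h u"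
    and T_meas [measurable]: "T \<in> borel_measurable Q" and T: "\<And>x. x \<in> space Q \<Longrightarrow> 0 \<le> T x \<and> T x \<le> 1"
  obtains g where "antimono g" "\<And>u. 0 \<le> g u \<and> g u \<le> 1"
    "(\<integral>x. g (F x) \<partial>Q) \<le> (\<integral>x. T x \<partial>Q)" "(\<integral>x. T x \<partial>P) \<le> (\<integral>x. g (F x) \<partial>P)"
proof -
  note [measurable] = borel_measurable_antimono[OF h(1)]
  have T_int: "integrable Q T" "0 \<le> (\<integral>x. T x \<partial>Q)" "(\<integral>x. T x \<partial>Q) \<le> 1"
    using unit_valued_integral[OF Q T_meas T] by simp_all
  consider "(\<integral>x. T x \<partial>Q) = 0" | "(\<integral>x. T x \<partial>Q) = 1" | "0 < (\<integral>x. T x \<partial>Q)" "(\<integral>x. T x \<partial>Q) < 1"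
    using T_int by linarith
  then show ?thesis
  proof cases
    case 1
    then have "AE x in Q. T x = 0"
      using T_int(1) T by (subst (asm) integral_nonneg_eq_0_iff_AE) auto
    have "(\<integral>x. T x \<partial>P) = (\<integral>x. h (F x) * T x \<partial>Q)"
      unfolding P_def by (subst integral_density) (auto simp: h(2))
    also have "\<dots> = (\<integral>x. 0 \<partial>Q)"
      using \<open>AE x in Q. T x = 0\<close> by (intro integral_cong_AE) auto
    finally show ?thesis
      using that[of "\<lambda>_. 0"] 1 by (auto simp: antimono_def)
  next
    case 2
    have "(\<integral>x. T x \<partial>P) \<le> 1"
      using unit_valued_integral(3)[OF P _ T] T_meas by (simp add: P_def)
    then show ?thesis
      using that[of "\<lambda>_. 1"] 2 P Q by (simp add: antimono_def prob_space.prob_space)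
  next
    case 3
    obtain t l where l: "0 \<le> l" "l \<le> 1" and level: "(\<integral>x. threshold_test t l (F x) \<partial>Q) = (\<integral>x. T x \<partial>Q)"
      using threshold_test_level_exists[OF Q F 3] by blast
    show ?thesis
      using that[of "threshold_test t l"] antimono_threshold_test[OF l] threshold_test_bounds[OF l] level
        neyman_pearson[OF Q P[unfolded P_def] _ h _ T l level] by (simp add: P_def)
  qed
qed

section \<open>Gaussian densities and their products\<close>

lemma indicator_PiE_eq_prod:
  assumes "finite I" and "x \<in> extensional I"
  shows "indicator (Pi\<^sub>E I A) x = (\<Prod>i\<in>I. indicator (A i) (x i) :: ennreal)"
proof (cases "\<forall>i\<in>I. x i \<in> A i")
  case True
  then show ?thesis
    using assms(2) by (simp add: PiE_iff)
next
  case False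
  then obtain i where i: "i \<in> I" "x i \<notin> A i"
    by blast
  then have "x \<notin> Pi\<^sub>E I A"
    by auto
  moreover have "(\<Prod>i\<in>I. indicator (A i) (x i) :: ennreal) = 0"
    using i assms(1) by (intro prod_zero bexI[of _ i]) auto
  ultimately show ?thesis
    by simp
qed

lemma PiM_density_prod:
  fixes M :: "'a measure" and f :: "'a \<Rightarrow> real"
  assumes I: "finite I" and "prob_space M" and "prob_space (density M f)"
    and [measurable]: "f \<in> borel_measurable M" and f: "\<And>x. 0 \<le> f x"
  shows "PiM I (\<lambda>_. density M f) = density (PiM I (\<lambda>_. M)) (\<lambda>x. \<Prod>i\<in>I. f (x i))"
proof -
  interpret D: product_sigma_finite "\<lambda>_. density M f"
    using assms(3) by (simp add: product_sigma_finite_def prob_space_imp_sigma_finite)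
  interpret S: product_sigma_finite "\<lambda>_. M"
    using assms(2) by (simp add: product_sigma_finite_def prob_space_imp_sigma_finite)
  show ?thesis
  proof (rule D.PiM_eqI[symmetric, OF I])
    show "sets (density (PiM I (\<lambda>_. M)) (\<lambda>x. \<Prod>i\<in>I. f (x i))) = sets (PiM I (\<lambda>_. density M f))"
      by (subst sets_density, rule sets_PiM_cong) auto
    fix A assume "\<And>i. i \<in> I \<Longrightarrow> A i \<in> sets (density M f)"
    then have A: "\<And>i. i \<in> I \<Longrightarrow> A i \<in> sets M"
      by simp
    have "emeasure (density (PiM I (\<lambda>_. M)) (\<lambda>x. \<Prod>i\<in>I. f (x i))) (Pi\<^sub>E I A)
        = (\<integral>\<^sup>+ x. ennreal (\<Prod>i\<in>I. f (x i)) * indicator (Pi\<^sub>E I A) x \<partial>PiM I (\<lambda>_. M))"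
      using sets_PiM_I_finite[OF I A] by (subst emeasure_density) auto
    also have "\<dots> = (\<integral>\<^sup>+ x. (\<Prod>i\<in>I. ennreal (f (x i)) * indicator (A i) (x i)) \<partial>PiM I (\<lambda>_. M))"
    proof (rule nn_integral_cong)
      fix x assume "x \<in> space (PiM I (\<lambda>_. M))"
      then have "x \<in> extensional I"
        by (simp add: space_PiM PiE_def)
      then show "ennreal (\<Prod>i\<in>I. f (x i)) * indicator (Pi\<^sub>E I A) x
          = (\<Prod>i\<in>I. ennreal (f (x i)) * indicator (A i) (x i))"
        by (simp add: indicator_PiE_eq_prod[OF I] prod.distrib prod_ennreal[symmetric] f)
    qed
    also have "\<dots> = (\<Prod>i\<in>I. \<integral>\<^sup>+ y. ennreal (f y) * indicator (A i) y \<partial>M)"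
      using A by (intro S.product_nn_integral_prod[OF I]) auto
    also have "\<dots> = (\<Prod>i\<in>I. emeasure (density M f) (A i))"
      using A by (intro prod.cong refl) (simp add: emeasure_density)
    finally show "emeasure (density (PiM I (\<lambda>_. M)) (\<lambda>x. \<Prod>i\<in>I. f (x i))) (Pi\<^sub>E I A)
        = (\<Prod>i\<in>I. emeasure (density M f) (A i))" .
  qed
qed

abbreviation normal_measure :: "real \<Rightarrow> real \<Rightarrow> real measure" where
  "normal_measure \<mu> \<sigma> \<equiv> density lborel (normal_density \<mu> \<sigma>)"

lemma distr_normal_measure_shift:
  "distr (normal_measure \<mu> \<sigma>) (normal_measure (\<mu> + \<delta>) \<sigma>) (\<lambda>y. y + \<delta>) = normal_measure (\<mu> + \<delta>) \<sigma>"
proof -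
  have "normal_measure (\<mu> + \<delta>) \<sigma> = density (distr lborel borel ((+) \<delta>)) (normal_density (\<mu> + \<delta>) \<sigma>)"
    by (simp add: lborel_distr_plus)
  also have "\<dots> = distr (density lborel (\<lambda>y. normal_density (\<mu> + \<delta>) \<sigma> (\<delta> + y))) borel ((+) \<delta>)"
    by (rule density_distr) auto
  also have "\<dots> = distr (normal_measure \<mu> \<sigma>) (normal_measure (\<mu> + \<delta>) \<sigma>) (\<lambda>y. y + \<delta>)"
    by (intro distr_cong) (simp_all add: normal_density_def algebra_simps)
  finally show ?thesis ..
qed

lemma integral_PiM_normal_shift:
  fixes I :: "'i set" and h :: "('i \<Rightarrow> real) \<Rightarrow> real"
  assumes "finite I" and "0 < \<sigma>" and h: "h \<in> borel_measurable (PiM I (\<lambda>_. normal_measure (\<mu> + \<delta>) \<sigma>))"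
  shows "(\<integral>x. h x \<partial>PiM I (\<lambda>_. normal_measure (\<mu> + \<delta>) \<sigma>))
       = (\<integral>x. h (compose I (\<lambda>y. y + \<delta>) x) \<partial>PiM I (\<lambda>_. normal_measure \<mu> \<sigma>))"
proof -
  have shift: "compose I (\<lambda>y. y + \<delta>)
      \<in> PiM I (\<lambda>_. normal_measure \<mu> \<sigma>) \<rightarrow>\<^sub>M PiM I (\<lambda>_. normal_measure (\<mu> + \<delta>) \<sigma>)"
    unfolding compose_def by measurable
  have "distr (PiM I (\<lambda>_. normal_measure \<mu> \<sigma>)) (PiM I (\<lambda>_. normal_measure (\<mu> + \<delta>) \<sigma>))
      (compose I (\<lambda>y. y + \<delta>))
      = PiM I (\<lambda>_. distr (normal_measure \<mu> \<sigma>) (normal_measure (\<mu> + \<delta>) \<sigma>) (\<lambda>y. y + \<delta>))"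
    by (rule distr_PiM_finite_prob_space[OF assms(1)])
      (auto intro!: product_prob_spaceI prob_space_normal_density assms(2))
  then have "distr (PiM I (\<lambda>_. normal_measure \<mu> \<sigma>)) (PiM I (\<lambda>_. normal_measure (\<mu> + \<delta>) \<sigma>))
      (compose I (\<lambda>y. y + \<delta>)) = PiM I (\<lambda>_. normal_measure (\<mu> + \<delta>) \<sigma>)"
    by (simp add: distr_normal_measure_shift)
  then show ?thesis
    using integral_distr[OF shift h] by simp
qed

lemma normal_density_eq_mult:
  assumes "0 < \<sigma>" and "0 < \<theta>"
  shows "normal_density \<mu> \<sigma> y
       = normal_density 0 \<theta> y * ((\<theta> / \<sigma>) * exp (- (y - \<mu>)\<^sup>2 / (2 * \<sigma>\<^sup>2) + y\<^sup>2 / (2 * \<theta>\<^sup>2)))"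
proof -
  have "sqrt (2 * pi * \<sigma>\<^sup>2) = sqrt (2 * pi) * \<sigma>" "sqrt (2 * pi * \<theta>\<^sup>2) = sqrt (2 * pi) * \<theta>"
    using assms by (simp_all add: real_sqrt_mult)
  then show ?thesis
    using assms unfolding normal_density_def by (simp add: exp_add[symmetric] field_simps)
qed

lemma normal_density_same_scale_ratio:
  assumes "0 < \<sigma>"
  shows "normal_density \<mu> \<sigma> y
       = normal_density 0 \<sigma> y * (exp (- \<mu>\<^sup>2 / (2 * \<sigma>\<^sup>2)) * exp (- (\<mu> / \<sigma>\<^sup>2) * (- y)))"
proof -
  have "- (y - \<mu>)\<^sup>2 / (2 * \<sigma>\<^sup>2) + y\<^sup>2 / (2 * \<sigma>\<^sup>2) = - \<mu>\<^sup>2 / (2 * \<sigma>\<^sup>2) + - (\<mu> / \<sigma>\<^sup>2) * (- y)"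
    using assms by (simp add: field_simps power2_eq_square)
  then show ?thesis
    using normal_density_eq_mult[OF assms assms, of \<mu> y] assms by (simp add: exp_add[symmetric])
qed

text \<open>For \<sigma> < \<theta> the log-likelihood ratio is a concave parabola in y, maximal at b.\<close>

lemma normal_density_smaller_scale_ratio:
  assumes "0 < \<sigma>" and "\<sigma> < \<theta>" and "0 \<le> \<mu>"
  obtains b c \<kappa> where "0 \<le> b" and "0 \<le> c" and "0 \<le> \<kappa>"
    and "\<And>y. normal_density \<mu> \<sigma> y = normal_density 0 \<theta> y * (c * exp (- \<kappa> * (y - b)\<^sup>2))"
proof
  define D where "D = 1 / \<sigma>\<^sup>2 - 1 / \<theta>\<^sup>2"
  have D: "0 < D"
    unfolding D_def using assms by (simp add: field_simps power_strict_mono)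
  define b where "b = \<mu> / (\<sigma>\<^sup>2 * D)"
  have Db: "D * b = \<mu> / \<sigma>\<^sup>2"
    unfolding b_def using D assms by (simp add: field_simps)
  define E where "E = D * b\<^sup>2 / 2 - \<mu>\<^sup>2 / (2 * \<sigma>\<^sup>2)"
  show "0 \<le> b"
    unfolding b_def using D assms by simp
  show "0 \<le> (\<theta> / \<sigma>) * exp E" "0 \<le> D / 2"
    using assms D by simp_all
  fix y
  have "E + - (D / 2) * (y - b)\<^sup>2 = - \<mu>\<^sup>2 / (2 * \<sigma>\<^sup>2) - D * y\<^sup>2 / 2 + (D * b) * y"
    unfolding E_def by (simp add: power2_eq_square algebra_simps)
  also have "\<dots> = - (y - \<mu>)\<^sup>2 / (2 * \<sigma>\<^sup>2) + y\<^sup>2 / (2 * \<theta>\<^sup>2)"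
    unfolding Db unfolding D_def using assms by (simp add: field_simps power2_eq_square)
  finally show "normal_density \<mu> \<sigma> y = normal_density 0 \<theta> y * ((\<theta> / \<sigma>) * exp E * exp (- (D / 2) * (y - b)\<^sup>2))"
    using normal_density_eq_mult[of \<sigma> \<theta> \<mu> y] assms by (simp add: exp_add[symmetric])
qed

lemma PiM_normal_measure_eq_density:
  fixes I :: "'i set" and \<psi> :: "real \<Rightarrow> real"
  assumes I: "finite I" and "0 < \<sigma>" and "0 < \<theta>" and "0 \<le> c"
    and [measurable]: "\<psi> \<in> borel_measurable borel"
    and ratio: "\<And>y. normal_density \<mu> \<sigma> y = normal_density 0 \<theta> y * (c * exp (- \<kappa> * \<psi> y))"
  shows "PiM I (\<lambda>_. normal_measure \<mu> \<sigma>)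
       = density (PiM I (\<lambda>_. normal_measure 0 \<theta>)) (\<lambda>x. c ^ card I * exp (- \<kappa> * (\<Sum>i\<in>I. \<psi> (x i))))"
proof -
  define L where "L y = c * exp (- \<kappa> * \<psi> y)" for y
  have [measurable]: "L \<in> borel_measurable borel"
    unfolding L_def by measurable
  have L_nonneg: "0 \<le> L y" for y
    unfolding L_def using \<open>0 \<le> c\<close> by simp
  have factor: "density (normal_measure 0 \<theta>) L = normal_measure \<mu> \<sigma>"
    by (subst density_density_eq)
      (auto simp: ratio L_def ennreal_mult'[symmetric] \<open>0 \<le> c\<close>)
  have "PiM I (\<lambda>_. normal_measure \<mu> \<sigma>) = density (PiM I (\<lambda>_. normal_measure 0 \<theta>)) (\<lambda>x. \<Prod>i\<in>I. L (x i))"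
    unfolding factor[symmetric]
    by (rule PiM_density_prod[OF I]) (auto simp: factor L_nonneg intro!: prob_space_normal_density assms(2,3))
  also have "(\<lambda>x. \<Prod>i\<in>I. L (x i)) = (\<lambda>x. c ^ card I * exp (- \<kappa> * (\<Sum>i\<in>I. \<psi> (x i))))"
    by (simp add: L_def prod.distrib exp_sum[OF I] sum_distrib_left)
  finally show ?thesis .
qed

section \<open>Anderson's inequality for shifted Gaussians\<close>

lemma normal_density_zero_mean_le:
  assumes "z\<^sup>2 \<le> w\<^sup>2"
  shows "normal_density 0 \<theta> w \<le> normal_density 0 \<theta> z"
proof -
  have "- w\<^sup>2 / (2 * \<theta>\<^sup>2) \<le> - z\<^sup>2 / (2 * \<theta>\<^sup>2)"
    using assms by (intro divide_right_mono) auto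
  then show ?thesis
    unfolding normal_density_def by (intro mult_left_mono) auto
qed

text \<open>Reflecting y to a + a' - y swaps the distances to a and a', and the factor of a centred
  Gaussian density changes sign at the same midpoint.\<close>

lemma reflection_product_nonneg:
  fixes g :: "real \<Rightarrow> real"
  assumes g: "antimono g" and a: "0 \<le> a" "a \<le> a'"
  shows "0 \<le> (g ((y - a)\<^sup>2 + s) - g ((y - a')\<^sup>2 + s)) *
              (normal_density 0 \<theta> y - normal_density 0 \<theta> (a + a' - y))"
proof -
  have d1: "(y - a')\<^sup>2 - (y - a)\<^sup>2 = (a' - a) * (a + a' - 2 * y)"
    and d2: "(a + a' - y)\<^sup>2 - y\<^sup>2 = (a + a') * (a + a' - 2 * y)"
    by (simp_all add: power2_eq_square algebra_simps)
  show ?thesis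
  proof (cases "2 * y \<le> a + a'")
    case True
    then have "0 \<le> (a' - a) * (a + a' - 2 * y)" "0 \<le> (a + a') * (a + a' - 2 * y)"
      using a by simp_all
    then have "(y - a)\<^sup>2 \<le> (y - a')\<^sup>2" "y\<^sup>2 \<le> (a + a' - y)\<^sup>2"
      using d1 d2 by linarith+
    then have "g ((y - a')\<^sup>2 + s) \<le> g ((y - a)\<^sup>2 + s)"
      and "normal_density 0 \<theta> (a + a' - y) \<le> normal_density 0 \<theta> y"
      by (auto intro: antimonoD[OF g] normal_density_zero_mean_le)
    then show ?thesis
      by simp
  next
    case False
    then have "(a' - a) * (a + a' - 2 * y) \<le> 0" "(a + a') * (a + a' - 2 * y) \<le> 0"
      using a by (simp_all add: mult_nonneg_nonpos)
    then have "(y - a')\<^sup>2 \<le> (y - a)\<^sup>2" "(a + a' - y)\<^sup>2 \<le> y\<^sup>2"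
      using d1 d2 by linarith+
    then have "g ((y - a)\<^sup>2 + s) \<le> g ((y - a')\<^sup>2 + s)"
      and "normal_density 0 \<theta> y \<le> normal_density 0 \<theta> (a + a' - y)"
      by (auto intro: antimonoD[OF g] normal_density_zero_mean_le)
    then show ?thesis
      by (simp add: mult_nonpos_nonpos)
  qed
qed

lemma integrable_normal_density_mult_unit:
  fixes h :: "real \<Rightarrow> real"
  assumes "0 < \<sigma>" and [measurable]: "h \<in> borel_measurable borel" and h: "\<And>y. 0 \<le> h y \<and> h y \<le> 1"
  shows "integrable lborel (\<lambda>y. normal_density \<mu> \<sigma> y * h y)"
proof (rule Bochner_Integration.integrable_bound[OF integrable_normal_density[OF assms(1)]])
  show "AE y in lborel. norm (normal_density \<mu> \<sigma> y * h y) \<le> norm (normal_density \<mu> \<sigma> y)"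
    using h by (auto simp: abs_mult intro!: mult_left_le)
  show "(\<lambda>y. normal_density \<mu> \<sigma> y * h y) \<in> borel_measurable lborel"
    by measurable
qed

lemma integral_normal_measure_shift_antimono:
  fixes g :: "real \<Rightarrow> real"
  assumes "0 < \<theta>" and g: "antimono g" "\<And>u. 0 \<le> g u \<and> g u \<le> 1" and a: "0 \<le> a" "a \<le> a'"
  shows "(\<integral>y. g ((y - a')\<^sup>2 + s) \<partial>normal_measure 0 \<theta>) \<le> (\<integral>y. g ((y - a)\<^sup>2 + s) \<partial>normal_measure 0 \<theta>)"
proof -
  note [measurable] = borel_measurable_antimono[OF g(1)]
  define \<phi> where "\<phi> = normal_density 0 \<theta>"
  define c where "c = a + a'"
  define h1 where "h1 y = g ((y - a)\<^sup>2 + s)" for y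
  define h2 where "h2 y = g ((y - a')\<^sup>2 + s)" for y
  have [measurable]: "h1 \<in> borel_measurable borel" "h2 \<in> borel_measurable borel"
    unfolding h1_def h2_def by measurable
  have reflect: "normal_density 0 \<theta> (c - y) = normal_density c \<theta> y" for y
    unfolding normal_density_def by (simp add: power2_commute)
  have integrable: "integrable lborel (\<lambda>y. \<phi> y * h y)" "integrable lborel (\<lambda>y. \<phi> (c - y) * h y)"
    if "h \<in> borel_measurable borel" "\<And>y. 0 \<le> h y \<and> h y \<le> 1" for h
    unfolding \<phi>_def reflect using integrable_normal_density_mult_unit[OF assms(1) that] by auto
  have h_bounds: "0 \<le> h1 y \<and> h1 y \<le> 1" "0 \<le> h2 y \<and> h2 y \<le> 1" for y
    unfolding h1_def h2_def using g(2) by auto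
  have substitute: "(\<integral>y. \<phi> y * h y \<partial>lborel) = (\<integral>y. \<phi> (c - y) * h (c - y) \<partial>lborel)" for h
    using lborel_integral_real_affine[of "-1" "\<lambda>y. \<phi> y * h y" c] by simp
  have swap: "h2 (c - y) = h1 y" "h1 (c - y) = h2 y" for y
    unfolding h1_def h2_def c_def by (simp_all add: power2_commute)
  have "0 \<le> (\<integral>y. (h1 y - h2 y) * (\<phi> y - \<phi> (c - y)) \<partial>lborel)"
    unfolding h1_def h2_def \<phi>_def c_def
    by (intro integral_nonneg_AE AE_I2 reflection_product_nonneg g(1) a)
  also have "\<dots> = (\<integral>y. \<phi> y * h1 y \<partial>lborel) - (\<integral>y. \<phi> (c - y) * h1 y \<partial>lborel)
       - (\<integral>y. \<phi> y * h2 y \<partial>lborel) + (\<integral>y. \<phi> (c - y) * h2 y \<partial>lborel)"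
    using integrable[of h1] integrable[of h2] h_bounds by (simp add: algebra_simps)
  also have "\<dots> = 2 * ((\<integral>y. \<phi> y * h1 y \<partial>lborel) - (\<integral>y. \<phi> y * h2 y \<partial>lborel))"
    using substitute[of h1] substitute[of h2] by (simp add: swap)
  finally show ?thesis
    by (simp add: integral_density \<phi>_def h1_def h2_def)
qed

lemma integral_PiM_insert_sum_sq:
  fixes I :: "'i set" and b :: "'i \<Rightarrow> real" and g :: "real \<Rightarrow> real"
  assumes "finite I" and "j \<notin> I" and "0 < \<theta>"
    and [measurable]: "g \<in> borel_measurable borel" and "\<And>u. 0 \<le> g u \<and> g u \<le> 1"
  shows "(\<integral>x. g (\<Sum>i\<in>insert j I. (x i - b i)\<^sup>2) \<partial>PiM (insert j I) (\<lambda>_. normal_measure 0 \<theta>))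
       = (\<integral>x. (\<integral>y. g ((y - b j)\<^sup>2 + (\<Sum>i\<in>I. (x i - b i)\<^sup>2)) \<partial>normal_measure 0 \<theta>)
            \<partial>PiM I (\<lambda>_. normal_measure 0 \<theta>))"
proof -
  let ?N = "normal_measure 0 \<theta>"
  have N: "prob_space ?N"
    using \<open>0 < \<theta>\<close> by (rule prob_space_normal_density)
  interpret product_sigma_finite "\<lambda>_::'i. ?N"
    by (simp add: product_sigma_finite_def prob_space_imp_sigma_finite[OF N])
  have "integrable (PiM (insert j I) (\<lambda>_. ?N)) (\<lambda>x. g (\<Sum>i\<in>insert j I. (x i - b i)\<^sup>2))"
    using assms(5) by (intro unit_valued_integral(1)[OF prob_space_PiM[OF N]]) auto
  then have "(\<integral>x. g (\<Sum>i\<in>insert j I. (x i - b i)\<^sup>2) \<partial>PiM (insert j I) (\<lambda>_. ?N))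
     = (\<integral>x. (\<integral>y. g (\<Sum>i\<in>insert j I. ((x(j := y)) i - b i)\<^sup>2) \<partial>?N) \<partial>PiM I (\<lambda>_. ?N))"
    by (rule product_integral_insert[OF assms(1,2)])
  also have "(\<lambda>x y. g (\<Sum>i\<in>insert j I. ((x(j := y)) i - b i)\<^sup>2))
      = (\<lambda>x y. g ((y - b j)\<^sup>2 + (\<Sum>i\<in>I. (x i - b i)\<^sup>2)))"
    using assms(1,2) by (intro ext arg_cong[where f=g]) (simp add: sum.insert, intro sum.cong, auto)
  finally show ?thesis .
qed

text \<open>Integrating out one coordinate leaves G b u, antitone in the squared distance u of the
  others; the induction hypothesis moves those, the one-dimensional case the remaining one.\<close>

lemma integral_PiM_normal_shift_antimono:
  fixes I :: "'i set" and a a' :: "'i \<Rightarrow> real" and g :: "real \<Rightarrow> real"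
  assumes "finite I" and "0 < \<theta>" and a: "\<And>i. i \<in> I \<Longrightarrow> 0 \<le> a i \<and> a i \<le> a' i"
    and "antimono g" and "\<And>u. 0 \<le> g u \<and> g u \<le> 1"
  shows "(\<integral>x. g (\<Sum>i\<in>I. (x i - a' i)\<^sup>2) \<partial>PiM I (\<lambda>_. normal_measure 0 \<theta>))
       \<le> (\<integral>x. g (\<Sum>i\<in>I. (x i - a i)\<^sup>2) \<partial>PiM I (\<lambda>_. normal_measure 0 \<theta>))"
  using assms(1,3-)
proof (induction I arbitrary: g rule: finite_induct)
  case empty
  show ?case
    by simp
next
  case (insert j I g)
  let ?N = "normal_measure 0 \<theta>"
  have N: "prob_space ?N"
    using \<open>0 < \<theta>\<close> by (rule prob_space_normal_density)
  have Pi: "prob_space (PiM I (\<lambda>_. ?N))"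
    using N by (rule prob_space_PiM)
  note [measurable] = borel_measurable_antimono[OF insert.prems(2)]
  define G where "G b u = (\<integral>y. g ((y - b)\<^sup>2 + u) \<partial>?N)" for b u
  have G_bounds: "0 \<le> G b u \<and> G b u \<le> 1" for b u
    unfolding G_def using unit_valued_integral[OF N, of "\<lambda>y. g ((y - b)\<^sup>2 + u)"] insert.prems(3) by simp
  have "antimono (G b)" for b
  proof (rule antimonoI)
    fix u v :: real assume "u \<le> v"
    then show "G b v \<le> G b u"
      unfolding G_def using insert.prems(2,3)
      by (intro integral_mono unit_valued_integral(1)[OF N]) (auto intro: antimonoD)
  qed
  note [measurable] = borel_measurable_antimono[OF this]
  have split: "(\<integral>x. g (\<Sum>i\<in>insert j I. (x i - b i)\<^sup>2) \<partial>PiM (insert j I) (\<lambda>_. ?N))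
      = (\<integral>x. G (b j) (\<Sum>i\<in>I. (x i - b i)\<^sup>2) \<partial>PiM I (\<lambda>_. ?N))" for b
    unfolding G_def using integral_PiM_insert_sum_sq[OF insert.hyps \<open>0 < \<theta>\<close>] insert.prems(3) by simp
  have "(\<integral>x. g (\<Sum>i\<in>insert j I. (x i - a' i)\<^sup>2) \<partial>PiM (insert j I) (\<lambda>_. ?N))
      = (\<integral>x. G (a' j) (\<Sum>i\<in>I. (x i - a' i)\<^sup>2) \<partial>PiM I (\<lambda>_. ?N))"
    by (rule split)
  also have "\<dots> \<le> (\<integral>x. G (a' j) (\<Sum>i\<in>I. (x i - a i)\<^sup>2) \<partial>PiM I (\<lambda>_. ?N))"
    using insert.prems(1) G_bounds by (intro insert.IH \<open>antimono (G (a' j))\<close>) auto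
  also have "\<dots> \<le> (\<integral>x. G (a j) (\<Sum>i\<in>I. (x i - a i)\<^sup>2) \<partial>PiM I (\<lambda>_. ?N))"
  proof (intro integral_mono unit_valued_integral(1)[OF Pi])
    show "G (a' j) u \<le> G (a j) u" for u
      unfolding G_def using insert.prems \<open>0 < \<theta>\<close> by (intro integral_normal_measure_shift_antimono) auto
  qed (use G_bounds in auto)
  also have "\<dots> = (\<integral>x. g (\<Sum>i\<in>insert j I. (x i - a i)\<^sup>2) \<partial>PiM (insert j I) (\<lambda>_. ?N))"
    by (rule split[symmetric])
  finally show ?case .
qed

lemma integral_PiM_normal_shift_antimono_linear:
  fixes I :: "'i set" and g :: "real \<Rightarrow> real"
  assumes "0 < \<theta>" and "0 \<le> \<delta>" and g: "antimono g" "\<And>u. 0 \<le> g u \<and> g u \<le> 1"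
  shows "(\<integral>x. g (\<Sum>i\<in>I. - (x i - \<delta>)) \<partial>PiM I (\<lambda>_. normal_measure 0 \<theta>))
       \<le> (\<integral>x. g (\<Sum>i\<in>I. - x i) \<partial>PiM I (\<lambda>_. normal_measure 0 \<theta>))"
proof (rule integral_mono)
  note [measurable] = borel_measurable_antimono[OF g(1)]
  have Q: "prob_space (PiM I (\<lambda>_. normal_measure 0 \<theta>))"
    by (intro prob_space_PiM prob_space_normal_density \<open>0 < \<theta>\<close>)
  show "integrable (PiM I (\<lambda>_. normal_measure 0 \<theta>)) (\<lambda>x. g (\<Sum>i\<in>I. - (x i - \<delta>)))"
    "integrable (PiM I (\<lambda>_. normal_measure 0 \<theta>)) (\<lambda>x. g (\<Sum>i\<in>I. - x i))"
    using g(2) by (intro unit_valued_integral(1)[OF Q]; simp)+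
  have "(\<Sum>i\<in>I. - x i) \<le> (\<Sum>i\<in>I. - (x i - \<delta>))" for x :: "'i \<Rightarrow> real"
    using \<open>0 \<le> \<delta>\<close> by (intro sum_mono) simp
  then show "g (\<Sum>i\<in>I. - (x i - \<delta>)) \<le> g (\<Sum>i\<in>I. - x i)" for x
    by (rule antimonoD[OF g(1)])
qed

section \<open>Monotonicity in the mean\<close>

lemma shifted_test_as_powerful:
  fixes I :: "'i set" and \<theta> :: real and \<psi> :: "real \<Rightarrow> real" and T :: "('i \<Rightarrow> real) \<Rightarrow> real"
  defines "Q \<equiv> PiM I (\<lambda>_. normal_measure 0 \<theta>)"
  assumes I: "finite I" and "0 < \<sigma>" and "0 < \<theta>" and "0 \<le> c" and "0 \<le> \<kappa>"
    and [measurable]: "\<psi> \<in> borel_measurable borel"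
    and ratio: "\<And>y. normal_density \<mu> \<sigma> y = normal_density 0 \<theta> y * (c * exp (- \<kappa> * \<psi> y))"
    and shift: "\<And>g :: real \<Rightarrow> real. antimono g \<Longrightarrow> (\<And>u. 0 \<le> g u \<and> g u \<le> 1) \<Longrightarrow>
       (\<integral>x. g (\<Sum>i\<in>I. \<psi> (x i - \<delta>)) \<partial>Q) \<le> (\<integral>x. g (\<Sum>i\<in>I. \<psi> (x i)) \<partial>Q)"
    and T: "T \<in> level_tests \<beta> Q"
  obtains T' where "T' \<in> level_tests \<beta> Q"
    and "(\<integral>x. T x \<partial>PiM I (\<lambda>_. normal_measure \<mu> \<sigma>)) \<le> (\<integral>x. T' x \<partial>PiM I (\<lambda>_. normal_measure (\<mu> + \<delta>) \<sigma>))"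
proof -
  define F where "F x = (\<Sum>i\<in>I. \<psi> (x i))" for x :: "'i \<Rightarrow> real"
  define h where "h u = c ^ card I * exp (- \<kappa> * u)" for u
  let ?P = "PiM I (\<lambda>_. normal_measure \<mu> \<sigma>)"
  have F_meas [measurable]: "F \<in> borel_measurable Q"
    unfolding F_def Q_def by measurable
  have Q: "prob_space Q"
    unfolding Q_def by (intro prob_space_PiM prob_space_normal_density \<open>0 < \<theta>\<close>)
  have P: "prob_space ?P"
    by (intro prob_space_PiM prob_space_normal_density \<open>0 < \<sigma>\<close>)
  have P_eq: "?P = density Q (\<lambda>x. h (F x))"
    unfolding Q_def h_def F_def using PiM_normal_measure_eq_density[OF I \<open>0 < \<sigma>\<close> \<open>0 < \<theta>\<close> \<open>0 \<le> c\<close> _ ratio] by simp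
  have h: "antimono h" "\<And>u. 0 \<le> h u"
    unfolding h_def using \<open>0 \<le> c\<close> \<open>0 \<le> \<kappa>\<close> by (auto intro!: antimonoI mult_left_mono)
  have T_meas [measurable]: "T \<in> borel_measurable Q" and T_bounds: "\<And>x. x \<in> space Q \<Longrightarrow> 0 \<le> T x \<and> T x \<le> 1"
    and T_level: "(\<integral>x. T x \<partial>Q) \<le> \<beta>"
    using T by (auto simp: level_tests_def)
  obtain g where g: "antimono g" "\<And>u. 0 \<le> g u \<and> g u \<le> 1"
    and g_level: "(\<integral>x. g (F x) \<partial>Q) \<le> (\<integral>x. T x \<partial>Q)" and g_power: "(\<integral>x. T x \<partial>?P) \<le> (\<integral>x. g (F x) \<partial>?P)"
    using antimono_test_as_powerful[OF Q P[unfolded P_eq] F_meas h T_meas T_bounds] P_eq by auto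
  note [measurable] = borel_measurable_antimono[OF g(1)]
  define T' where "T' x = g (\<Sum>i\<in>I. \<psi> (x i - \<delta>))" for x :: "'i \<Rightarrow> real"
  have "(\<integral>x. T' x \<partial>PiM I (\<lambda>_. normal_measure (\<mu> + \<delta>) \<sigma>)) = (\<integral>x. T' (compose I (\<lambda>y. y + \<delta>) x) \<partial>?P)"
    by (rule integral_PiM_normal_shift[OF I \<open>0 < \<sigma>\<close>]) (simp add: T'_def)
  also have "\<dots> = (\<integral>x. g (F x) \<partial>?P)"
    unfolding T'_def F_def by (intro Bochner_Integration.integral_cong refl arg_cong[where f=g] sum.cong) (auto simp: compose_def)
  finally have power: "(\<integral>x. g (F x) \<partial>?P) = (\<integral>x. T' x \<partial>PiM I (\<lambda>_. normal_measure (\<mu> + \<delta>) \<sigma>))" ..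
  have "(\<integral>x. T' x \<partial>Q) \<le> \<beta>"
    using shift[OF g] g_level T_level unfolding T'_def F_def by linarith
  then have "T' \<in> level_tests \<beta> Q"
    using g(2) unfolding level_tests_def T'_def Q_def by simp
  then show ?thesis
    using that g_power power by simp
qed

lemma gaussian_shifted_test_as_powerful:
  fixes I :: "'i set" and T :: "('i \<Rightarrow> real) \<Rightarrow> real"
  assumes I: "finite I" and "0 < \<sigma>" and "\<sigma> \<le> \<theta>" and "0 \<le> \<mu>" and "0 \<le> \<delta>"
    and T: "T \<in> level_tests \<beta> (PiM I (\<lambda>_. normal_measure 0 \<theta>))"
  obtains T' where "T' \<in> level_tests \<beta> (PiM I (\<lambda>_. normal_measure 0 \<theta>))"
    and "(\<integral>x. T x \<partial>PiM I (\<lambda>_. normal_measure \<mu> \<sigma>)) \<le> (\<integral>x. T' x \<partial>PiM I (\<lambda>_. normal_measure (\<mu> + \<delta>) \<sigma>))"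
proof -
  let ?Q = "PiM I (\<lambda>_. normal_measure 0 \<theta>)"
  have "0 < \<theta>"
    using assms by simp
  show ?thesis
  proof (cases "\<sigma> = \<theta>")
    case True
    define c where "c = exp (- \<mu>\<^sup>2 / (2 * \<sigma>\<^sup>2))"
    define \<kappa> where "\<kappa> = \<mu> / \<sigma>\<^sup>2"
    have "0 \<le> c" "0 \<le> \<kappa>"
      using \<open>0 \<le> \<mu>\<close> by (simp_all add: c_def \<kappa>_def)
    have ratio: "normal_density \<mu> \<sigma> y = normal_density 0 \<theta> y * (c * exp (- \<kappa> * uminus y))" for y
      unfolding c_def \<kappa>_def True[symmetric] by (rule normal_density_same_scale_ratio[OF \<open>0 < \<sigma>\<close>])
    show ?thesis
      by (rule shifted_test_as_powerful[OF I \<open>0 < \<sigma>\<close> \<open>0 < \<theta>\<close> \<open>0 \<le> c\<close> \<open>0 \<le> \<kappa>\<close> _ ratio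
          integral_PiM_normal_shift_antimono_linear[OF \<open>0 < \<theta>\<close> \<open>0 \<le> \<delta>\<close>] T that])
        measurable
  next
    case False
    then obtain b c \<kappa> where "0 \<le> b" "0 \<le> c" "0 \<le> \<kappa>"
      and ratio: "\<And>y. normal_density \<mu> \<sigma> y = normal_density 0 \<theta> y * (c * exp (- \<kappa> * (y - b)\<^sup>2))"
      using normal_density_smaller_scale_ratio \<open>0 < \<sigma>\<close> \<open>\<sigma> \<le> \<theta>\<close> \<open>0 \<le> \<mu>\<close> by (metis order_le_less)
    show ?thesis
    proof (rule shifted_test_as_powerful[OF I \<open>0 < \<sigma>\<close> \<open>0 < \<theta>\<close> \<open>0 \<le> c\<close> \<open>0 \<le> \<kappa>\<close> _ ratio _ T that])
      fix g :: "real \<Rightarrow> real" assume g: "antimono g" "\<And>u. 0 \<le> g u \<and> g u \<le> 1"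
      have "(\<integral>x. g (\<Sum>i\<in>I. (x i - (b + \<delta>))\<^sup>2) \<partial>?Q) \<le> (\<integral>x. g (\<Sum>i\<in>I. (x i - b)\<^sup>2) \<partial>?Q)"
        using integral_PiM_normal_shift_antimono[OF I \<open>0 < \<theta>\<close> _ g, of "\<lambda>_. b" "\<lambda>_. b + \<delta>"]
          \<open>0 \<le> b\<close> \<open>0 \<le> \<delta>\<close> by simp
      then show "(\<integral>x. g (\<Sum>i\<in>I. (x i - \<delta> - b)\<^sup>2) \<partial>?Q) \<le> (\<integral>x. g (\<Sum>i\<in>I. (x i - b)\<^sup>2) \<partial>?Q)"
        by (simp add: algebra_simps)
    qed simp
  qed
qed

lemma test_pair_gauss_prod: "0 < \<sigma> \<Longrightarrow> 0 < \<theta> \<Longrightarrow> test_pair (gauss_prod n \<mu> \<sigma>) (gauss_prod n \<nu> \<theta>)"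
  unfolding test_pair_def test_pair_axioms_def gauss_prod_def
  by (auto intro!: prob_space_PiM prob_space_normal_density sets_PiM_cong)

lemma alpha_beta_gauss_prod_antimono_mean:
  assumes "0 < \<sigma>" and "\<sigma> \<le> \<theta>" and "0 \<le> \<mu>" and "\<mu> \<le> \<mu>'" and "0 \<le> \<beta>"
  shows "alpha_beta \<beta> (gauss_prod n \<mu>' \<sigma>) (gauss_prod n 0 \<theta>) \<le> alpha_beta \<beta> (gauss_prod n \<mu> \<sigma>) (gauss_prod n 0 \<theta>)"
proof -
  have pair: "test_pair (gauss_prod n \<nu> \<sigma>) (gauss_prod n 0 \<theta>)" for \<nu>
    using assms by (intro test_pair_gauss_prod) auto
  show ?thesis
  proof (rule test_pair.le_alpha_beta[OF pair \<open>0 \<le> \<beta>\<close>])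
    fix T assume "T \<in> level_tests \<beta> (gauss_prod n 0 \<theta>)"
    then obtain T' where T': "T' \<in> level_tests \<beta> (gauss_prod n 0 \<theta>)"
      and power: "(\<integral>x. T x \<partial>gauss_prod n \<mu> \<sigma>) \<le> (\<integral>x. T' x \<partial>gauss_prod n \<mu>' \<sigma>)"
      using gaussian_shifted_test_as_powerful[of "{..<n}" \<sigma> \<theta> \<mu> "\<mu>' - \<mu>" T \<beta>] assms
      unfolding gauss_prod_def by auto
    show "alpha_beta \<beta> (gauss_prod n \<mu>' \<sigma>) (gauss_prod n 0 \<theta>) \<le> 1 - (\<integral>x. T x \<partial>gauss_prod n \<mu> \<sigma>)"
      using test_pair.alpha_beta_le[OF pair[of \<mu>'] T'] power by simp
  qed
qed

theorem lemma3:
  fixes \<sigma> \<theta> :: real and n :: nat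
  assumes "0 < \<sigma>" and "\<sigma> \<le> \<theta>" and "n \<ge> 1"
  defines "f \<equiv> (\<lambda>\<beta> \<gamma>. alpha_beta \<beta> (gauss_prod n (sqrt \<gamma>) \<sigma>) (gauss_prod n 0 \<theta>))"
  shows "(\<forall>\<beta>\<in>{0..1}. antimono_on {0..} (\<lambda>\<gamma>. f \<beta> \<gamma>)) \<and>
         (\<forall>\<gamma>>0. convex_on {0..1} (\<lambda>\<beta>. f \<beta> \<gamma>) \<and> antimono_on {0..1} (\<lambda>\<beta>. f \<beta> \<gamma>))"
proof (intro conjI ballI allI impI)
  fix \<beta> :: real assume "\<beta> \<in> {0..1}"
  then show "antimono_on {0..} (\<lambda>\<gamma>. f \<beta> \<gamma>)"
    unfolding f_def using assms(1,2)
    by (intro monotone_onI alpha_beta_gauss_prod_antimono_mean real_sqrt_le_mono) auto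
next
  fix \<gamma> :: real assume "0 < \<gamma>"
  interpret test_pair "gauss_prod n (sqrt \<gamma>) \<sigma>" "gauss_prod n 0 \<theta>"
    using assms(1,2) by (intro test_pair_gauss_prod) auto
  show "convex_on {0..1} (\<lambda>\<beta>. f \<beta> \<gamma>)"
    unfolding f_def using convex_on_alpha_beta by (rule convex_on_subset) auto
  show "antimono_on {0..1} (\<lambda>\<beta>. f \<beta> \<gamma>)"
    unfolding f_def using antimono_on_alpha_beta by (rule monotone_on_subset) auto
qed

end
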